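(* Let $u(t) = \frac{t-1}{t\log t}$ for $t>0$, $t\neq1$, $u(1)=1$, and consider on $\mathbb C^\ast = \mathbb C\setminus\{0\}$ the conformal metric $g(z,X) = \big(1 + |z|^2 u^2(|z|^2)\big)|X|^2$. Let $\kappa(z)$ denote its Gaussian curvature at $z$. Then $\kappa(z) \le 0$ for all $z \in \mathbb C^\ast$, $\kappa(z) \to -4$ as $z \to 0$, and $\kappa(z) \to 0$ as $|z| \to \infty$.
   Context: For a conformal metric $h(z)|dz|^2$ on a planar domain, the Gaussian curvature is $-2h^{-1}\,\partial^2\log h/\partial z\partial\overline z$. *)

theory Defs
  imports "HOL-Analysis.Analysis"
begin

definition dxx :: "(complex \<Rightarrow> real) \<Rightarrow> complex \<Rightarrow> real" where
  "dxx f z = deriv (\<lambda>a. deriv (\<lambda>b. f (Complex b (Im z))) a) (Re z)"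

definition dyy :: "(complex \<Rightarrow> real) \<Rightarrow> complex \<Rightarrow> real" where
  "dyy f z = deriv (\<lambda>a. deriv (\<lambda>b. f (Complex (Re z) b)) a) (Im z)"

text \<open>The operator d^2/dz dzbar = (1/4)(d^2/dx^2 + d^2/dy^2).\<close>
definition ddbar :: "(complex \<Rightarrow> real) \<Rightarrow> complex \<Rightarrow> real" where
  "ddbar f z = (dxx f z + dyy f z) / 4"

text \<open>Gaussian curvature of the conformal metric h(z)|dz|^2.\<close>
definition gauss_curv :: "(complex \<Rightarrow> real) \<Rightarrow> complex \<Rightarrow> real" where
  "gauss_curv h z = - 2 / h z * ddbar (\<lambda>w. ln (h w)) z"

definition uu :: "real \<Rightarrow> real" where
  "uu t = (if t = 1 then 1 else (t - 1) / (t * ln t))"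

definition hh :: "complex \<Rightarrow> real" where
  "hh z = 1 + (cmod z)^2 * (uu ((cmod z)^2))^2"

end

theory Submission
  imports Defs "HOL-Real_Asymp.Real_Asymp"
begin

text \<open>In the coordinate s = ln |z| the density is hh z = 1 + F(s)^2 with F(s) = sinh s / s.
For a function of ln |z| alone the Laplacian is G''(s) / |z|^2 (the first-order terms cancel
because ln |z| is harmonic), so the curvature is -G''(s) / (2 e^(2s) hh z) with
G = ln (1 + F^2). Since F is log-convex, F F'' - F'^2 = (sinh^2 s - s^2) / s^4 \<ge> 0, G is convex
and the curvature is \<le> 0. The limits at 0 and \<infinity> become limits for s \<rightarrow> \<mp>\<infinity> of an
explicit expression in exp, obtained from its asymptotic expansion.\<close>

lemma deriv2_log_radial:
  fixes G G' G'' g :: "real \<Rightarrow> real"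
  assumes G: "\<And>s. (G has_real_derivative G' s) (at s)"
    and G': "\<And>s. (G' has_real_derivative G'' s) (at s)"
    and g: "\<And>b. 0 < b^2 + c^2 \<Longrightarrow> g b = G (ln (b^2 + c^2) / 2)"
    and a: "0 < a^2 + c^2"
  shows "deriv (deriv g) a
    = (a^2 * G'' (ln (a^2 + c^2) / 2) + (c^2 - a^2) * G' (ln (a^2 + c^2) / 2)) / (a^2 + c^2)^2"
proof -
  define U where "U = {b::real. 0 < b^2 + c^2}"
  define l where "l b = ln (b^2 + c^2) / 2" for b
  have U: "open U"
    unfolding U_def by (intro open_Collect_less continuous_intros)
  have aU: "a \<in> U"
    using a by (simp add: U_def)
  have l: "(l has_real_derivative b / (b^2 + c^2)) (at b)" if "b \<in> U" for b
  proof -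
    have "0 < b^2 + c^2"
      using that by (simp add: U_def)
    then show ?thesis
      unfolding l_def by (auto intro!: derivative_eq_intros simp: divide_simps)
  qed
  have q: "((\<lambda>b. b / (b^2 + c^2)) has_real_derivative (c^2 - a^2) / (a^2 + c^2)^2) (at a)"
    using a by (auto intro!: derivative_eq_intros simp: field_simps power2_eq_square)
  have deriv_g: "deriv g b = G' (l b) * (b / (b^2 + c^2))" if "b \<in> U" for b
  proof -
    have "((\<lambda>b. G (l b)) has_real_derivative G' (l b) * (b / (b^2 + c^2))) (at b)"
      by (rule DERIV_chain2[OF G l[OF that]])
    then have "(g has_real_derivative G' (l b) * (b / (b^2 + c^2))) (at b)"
      by (rule has_field_derivative_transform_within_open[OF _ U that])
         (simp add: g U_def l_def)
    then show ?thesis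
      by (rule DERIV_imp_deriv)
  qed
  have "((\<lambda>b. G' (l b) * (b / (b^2 + c^2))) has_real_derivative
      G'' (l a) * (a / (a^2 + c^2)) * (a / (a^2 + c^2)) + (c^2 - a^2) / (a^2 + c^2)^2 * G' (l a))
      (at a)" (is "(_ has_real_derivative ?D) _")
    by (rule DERIV_mult[OF DERIV_chain2[OF G' l[OF aU]] q])
  then have "(deriv g has_real_derivative ?D) (at a)"
    by (rule has_field_derivative_transform_within_open[OF _ U aU]) (simp add: deriv_g)
  moreover have "?D = (a^2 * G'' (l a) + (c^2 - a^2) * G' (l a)) / (a^2 + c^2)^2"
    by (simp add: power2_eq_square add_divide_distrib mult_ac)
  ultimately show ?thesis
    unfolding l_def by (simp add: DERIV_imp_deriv)
qed

lemma ddbar_log_radial: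
  fixes G G' G'' :: "real \<Rightarrow> real" and f :: "complex \<Rightarrow> real"
  assumes G: "\<And>s. (G has_real_derivative G' s) (at s)"
    and G': "\<And>s. (G' has_real_derivative G'' s) (at s)"
    and f: "\<And>w. w \<noteq> 0 \<Longrightarrow> f w = G (ln (cmod w))"
    and z: "z \<noteq> 0"
  shows "ddbar f z = G'' (ln (cmod z)) / (4 * (cmod z)^2)"
proof -
  have f_Complex: "f (Complex b c) = G (ln (b^2 + c^2) / 2)" if "0 < b^2 + c^2" for b c
  proof -
    have "Complex b c \<noteq> 0"
      using that by (auto simp: complex_eq_iff)
    then show ?thesis
      using that by (simp add: f cmod_def ln_sqrt)
  qed
  define x y where "x = Re z" and "y = Im z"
  have \<rho>: "(cmod z)^2 = x^2 + y^2" "0 < x^2 + y^2"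
    using z by (auto simp: x_def y_def cmod_power2 complex_eq_iff sum_power2_gt_zero_iff)
  have ln_cmod: "ln (cmod z) = ln (x^2 + y^2) / 2"
    by (simp add: cmod_def x_def y_def ln_sqrt)
  have dxx: "dxx f z = (x^2 * G'' (ln (x^2 + y^2) / 2) + (y^2 - x^2) * G' (ln (x^2 + y^2) / 2))
      / (x^2 + y^2)^2"
    unfolding dxx_def x_def y_def
    by (rule deriv2_log_radial[OF G G' f_Complex \<rho>(2)[unfolded x_def y_def]])
  have dyy: "dyy f z = (y^2 * G'' (ln (y^2 + x^2) / 2) + (x^2 - y^2) * G' (ln (y^2 + x^2) / 2))
      / (y^2 + x^2)^2"
    unfolding dyy_def x_def y_def
    by (rule deriv2_log_radial[OF G G'])
       (use f_Complex \<rho>(2) in \<open>simp_all add: add.commute x_def y_def\<close>)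
  have "dxx f z + dyy f z = (x^2 + y^2) * G'' (ln (x^2 + y^2) / 2) / (x^2 + y^2)^2"
    unfolding dxx dyy by (simp add: add_divide_distrib[symmetric] algebra_simps)
  also have "\<dots> = G'' (ln (x^2 + y^2) / 2) / (x^2 + y^2)"
    using \<rho>(2) by (simp add: power2_eq_square[of "x^2 + y^2"])
  finally have "dxx f z + dyy f z = G'' (ln (x^2 + y^2) / 2) / (x^2 + y^2)" .
  then show ?thesis
    unfolding ddbar_def ln_cmod \<rho>(1) by simp
qed

lemma has_real_derivative_removable_0:
  fixes F F' f f' :: "real \<Rightarrow> real"
  assumes F: "\<And>x. x \<noteq> 0 \<Longrightarrow> F x = f x"
    and F': "\<And>x. x \<noteq> 0 \<Longrightarrow> F' x = f' x"
    and f: "\<And>x. x \<noteq> 0 \<Longrightarrow> (f has_real_derivative f' x) (at x)"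
    and quotient: "((\<lambda>y. (f y - F 0) / y) \<longlongrightarrow> F' 0) (at 0)"
  shows "(F has_real_derivative F' x) (at x)"
proof (cases "x = 0")
  case True
  have "\<forall>\<^sub>F y in at 0. (f y - F 0) / y = (F y - F 0) / (y - 0)"
    by (simp add: eventually_at_filter F)
  then have "((\<lambda>y. (F y - F 0) / (y - 0)) \<longlongrightarrow> F' 0) (at 0)"
    by (rule Lim_transform_eventually[OF quotient])
  then show ?thesis
    using True by (simp add: has_field_derivative_iff)
next
  case False
  show ?thesis
    unfolding F'[OF False]
    by (rule has_field_derivative_transform_within_open[OF f[OF False], where S = "-{0}"])
       (use False in \<open>auto simp: F F'\<close>)
qed

definition sinhc :: "real \<Rightarrow> real" where
  "sinhc x = (if x = 0 then 1 else sinh x / x)"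

definition sinhc' :: "real \<Rightarrow> real" where
  "sinhc' x = (if x = 0 then 0 else (x * cosh x - sinh x) / x^2)"

definition sinhc'' :: "real \<Rightarrow> real" where
  "sinhc'' x = (if x = 0 then 1/3 else (x^2 * sinh x - 2 * x * cosh x + 2 * sinh x) / x^3)"

lemma has_real_derivative_sinhc: "(sinhc has_real_derivative sinhc' x) (at x)"
proof (rule has_real_derivative_removable_0)
  show "((\<lambda>y. sinh y / y) has_real_derivative (y * cosh y - sinh y) / y^2) (at y)"
    if "y \<noteq> 0" for y
    using that by (auto intro!: derivative_eq_intros simp: power2_eq_square field_simps)
  show "((\<lambda>y. (sinh y / y - sinhc 0) / y) \<longlongrightarrow> sinhc' 0) (at 0)"
    unfolding sinhc_def sinhc'_def sinh_field_def by simp real_asymp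
qed (simp_all add: sinhc_def sinhc'_def)

lemma has_real_derivative_sinhc': "(sinhc' has_real_derivative sinhc'' x) (at x)"
proof (rule has_real_derivative_removable_0)
  show "((\<lambda>y. (y * cosh y - sinh y) / y^2) has_real_derivative
      (y^2 * sinh y - 2 * y * cosh y + 2 * sinh y) / y^3) (at y)" if "y \<noteq> 0" for y
    using that
    by (auto intro!: derivative_eq_intros simp: power2_eq_square power3_eq_cube field_simps)
  show "((\<lambda>y. ((y * cosh y - sinh y) / y^2 - sinhc' 0) / y) \<longlongrightarrow> sinhc'' 0) (at 0)"
    unfolding sinhc'_def sinhc''_def sinh_field_def cosh_field_def by simp real_asymp
qed (simp_all add: sinhc'_def sinhc''_def)

lemma sinhc_log_convexity_defect:
  assumes "x \<noteq> 0"
  shows "sinhc x * sinhc'' x - (sinhc' x)^2 = ((sinh x)^2 - x^2) / x^4"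
proof -
  define s c where "s = sinh x" and "c = cosh x"
  have "sinhc x * sinhc'' x - (sinhc' x)^2
      = (s * (x^2 * s - 2 * x * c + 2 * s) - (x * c - s)^2) / x^4"
    using assms by (simp add: sinhc_def sinhc'_def sinhc''_def s_def c_def field_simps
      power2_eq_square power3_eq_cube power4_eq_xxxx)
  also have "s * (x^2 * s - 2 * x * c + 2 * s) - (x * c - s)^2 = s^2 - x^2 * (c^2 - s^2)"
    by (simp add: algebra_simps power2_eq_square)
  also have "c^2 - s^2 = 1"
    by (simp add: s_def c_def hyperbolic_pythagoras)
  finally show ?thesis
    by (simp add: s_def)
qed

lemma sinhc_log_convex: "(sinhc' x)^2 \<le> sinhc x * sinhc'' x"
proof (cases "x = 0")
  case False
  have "\<bar>x\<bar> \<le> \<bar>sinh x\<bar>"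
    using real_le_abs_sinh[of x] by (simp add: sinh_field_def exp_minus)
  then have "0 \<le> ((sinh x)^2 - x^2) / x^4"
    by (simp add: abs_le_square_iff)
  then show ?thesis
    using sinhc_log_convexity_defect[OF False] by linarith
qed (simp add: sinhc_def sinhc'_def sinhc''_def)

lemma ln_1_plus_sq_derivatives:
  fixes F F' F'' :: "real \<Rightarrow> real"
  assumes F: "(F has_real_derivative F' x) (at x)"
    and F': "(F' has_real_derivative F'' x) (at x)"
  shows "((\<lambda>x. ln (1 + (F x)^2)) has_real_derivative 2 * F x * F' x / (1 + (F x)^2)) (at x)"
    and "((\<lambda>x. 2 * F x * F' x / (1 + (F x)^2)) has_real_derivative
      2 * ((F' x)^2 + F x * F'' x + (F x)^2 * (F x * F'' x - (F' x)^2)) / (1 + (F x)^2)^2) (at x)"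
proof -
  have pos: "0 < 1 + (F x)^2"
    by (simp add: add_pos_nonneg)
  show "((\<lambda>x. ln (1 + (F x)^2)) has_real_derivative 2 * F x * F' x / (1 + (F x)^2)) (at x)"
    using pos by (auto intro!: derivative_eq_intros F simp: field_simps)
  show "((\<lambda>x. 2 * F x * F' x / (1 + (F x)^2)) has_real_derivative
      2 * ((F' x)^2 + F x * F'' x + (F x)^2 * (F x * F'' x - (F' x)^2)) / (1 + (F x)^2)^2) (at x)"
    using pos by (auto intro!: derivative_eq_intros F F' simp: field_simps power2_eq_square)
qed

lemma hh_eq_sinhc:
  assumes "w \<noteq> 0"
  shows "hh w = 1 + (sinhc (ln (cmod w)))^2"
proof -
  define r where "r = cmod w"
  have r: "0 < r"
    using assms by (simp add: r_def)
  show ?thesis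
  proof (cases "r = 1")
    case False
    have "r^2 \<noteq> 1" "ln r \<noteq> 0"
      using r False by (simp_all add: power2_eq_1_iff)
    moreover have "ln (r^2) = 2 * ln r"
      using r by (simp add: ln_realpow)
    ultimately have "hh w = 1 + ((r - inverse r) / 2 / ln r)^2"
      using r by (simp add: hh_def uu_def r_def[symmetric] field_simps power2_eq_square)
    then show ?thesis
      using \<open>ln r \<noteq> 0\<close> r by (simp add: sinhc_def sinh_ln_real r_def[symmetric])
  qed (simp add: hh_def uu_def sinhc_def r_def[symmetric])
qed

text \<open>The numerator is (1 + sinhc^2)^2 / 2 times the second derivative of ln (1 + sinhc^2),
arranged so that log-convexity of sinhc makes every summand nonnegative.\<close>
definition hh_curv_profile :: "real \<Rightarrow> real" where
  "hh_curv_profile s = - ((sinhc' s)^2 + sinhc s * sinhc'' s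
      + (sinhc s)^2 * (sinhc s * sinhc'' s - (sinhc' s)^2))
    / (exp (2 * s) * (1 + (sinhc s)^2)^3)"

lemma gauss_curv_hh:
  assumes z: "z \<noteq> 0"
  shows "gauss_curv hh z = hh_curv_profile (ln (cmod z))"
proof -
  define s where "s = ln (cmod z)"
  define G' G'' where "G' x = 2 * sinhc x * sinhc' x / (1 + (sinhc x)^2)"
    and "G'' x = 2 * ((sinhc' x)^2 + sinhc x * sinhc'' x
      + (sinhc x)^2 * (sinhc x * sinhc'' x - (sinhc' x)^2)) / (1 + (sinhc x)^2)^2" for x
  note derivs = ln_1_plus_sq_derivatives[OF has_real_derivative_sinhc has_real_derivative_sinhc']
  have "ddbar (\<lambda>w. ln (hh w)) z = G'' s / (4 * (cmod z)^2)"
    unfolding s_def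
  proof (rule ddbar_log_radial[where G = "\<lambda>x. ln (1 + (sinhc x)^2)"])
    show "((\<lambda>x. ln (1 + (sinhc x)^2)) has_real_derivative G' x) (at x)" for x
      unfolding G'_def by (rule derivs(1))
    show "(G' has_real_derivative G'' x) (at x)" for x
      unfolding G'_def[abs_def] G''_def by (rule derivs(2))
  qed (simp_all add: hh_eq_sinhc z)
  also have "(cmod z)^2 = exp (2 * s)"
    using z by (simp add: s_def exp_double)
  finally have ddbar: "ddbar (\<lambda>w. ln (hh w)) z = G'' s / (4 * exp (2 * s))" .
  define N h where "N = (sinhc' s)^2 + sinhc s * sinhc'' s
      + (sinhc s)^2 * (sinhc s * sinhc'' s - (sinhc' s)^2)"
    and "h = 1 + (sinhc s)^2"
  have "G'' s = 2 * N / h^2" and "hh z = h" and "0 < h"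
    by (simp_all add: G''_def N_def h_def s_def hh_eq_sinhc z add_pos_nonneg)
  then have "gauss_curv hh z = - N / (exp (2 * s) * h^3)"
    unfolding gauss_curv_def ddbar by (simp add: field_simps power2_eq_square power3_eq_cube)
  then show ?thesis
    by (simp add: hh_curv_profile_def N_def h_def s_def)
qed

lemma hh_curv_profile_nonpos: "hh_curv_profile s \<le> 0"
proof -
  have convex: "(sinhc' s)^2 \<le> sinhc s * sinhc'' s"
    by (rule sinhc_log_convex)
  moreover have "0 \<le> (sinhc s)^2 * (sinhc s * sinhc'' s - (sinhc' s)^2)"
    using convex by simp
  ultimately have "0 \<le> (sinhc' s)^2 + sinhc s * sinhc'' s
      + (sinhc s)^2 * (sinhc s * sinhc'' s - (sinhc' s)^2)"
    using zero_le_power2[of "sinhc' s"] by linarith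
  then show ?thesis
    unfolding hh_curv_profile_def by (simp add: divide_nonpos_pos add_pos_nonneg)
qed

lemma tendsto_hh_curv_profile:
  shows "(hh_curv_profile \<longlongrightarrow> 0) at_top"
    and "(hh_curv_profile \<longlongrightarrow> -4) at_bot"
proof -
  \<comment> \<open>Writing the log-convexity defect in closed form avoids a cancellation on which
    real_asymp fails at -\<infinity>.\<close>
  define K :: "real \<Rightarrow> real" where "K s = - (((s * cosh s - sinh s) / s^2)^2
      + sinh s / s * ((s^2 * sinh s - 2 * s * cosh s + 2 * sinh s) / s^3)
      + (sinh s / s)^2 * (((sinh s)^2 - s^2) / s^4))
    / (exp (2 * s) * (1 + (sinh s / s)^2)^3)" for s
  have K: "K s = hh_curv_profile s" if "s \<noteq> 0" for s
    unfolding K_def hh_curv_profile_def sinhc_log_convexity_defect[OF that]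
    using that by (simp add: sinhc_def sinhc'_def sinhc''_def)
  have "(K \<longlongrightarrow> 0) at_top"
    unfolding K_def sinh_field_def cosh_field_def by real_asymp
  moreover have "\<forall>\<^sub>F s in at_top. K s = hh_curv_profile s"
    using eventually_at_top_not_equal[of 0] by eventually_elim (rule K)
  ultimately show "(hh_curv_profile \<longlongrightarrow> 0) at_top"
    by (rule Lim_transform_eventually)
  have "((\<lambda>s. K (- s)) \<longlongrightarrow> -4) at_top"
    unfolding K_def sinh_field_def cosh_field_def by real_asymp (simp add: power_one_over)
  then have "(K \<longlongrightarrow> -4) at_bot"
    by (simp add: filterlim_at_bot_mirror)
  moreover have "\<forall>\<^sub>F s in at_bot. K s = hh_curv_profile s"
    using eventually_at_bot_not_equal[of 0] by eventually_elim (rule K)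
  ultimately show "(hh_curv_profile \<longlongrightarrow> -4) at_bot"
    by (rule Lim_transform_eventually)
qed

lemma tendsto_gauss_curv_hh:
  assumes "(hh_curv_profile \<longlongrightarrow> l) G"
    and "filterlim (\<lambda>z. ln (cmod z)) G F"
    and "\<forall>\<^sub>F z in F. z \<noteq> 0"
  shows "(gauss_curv hh \<longlongrightarrow> l) F"
proof -
  have "((\<lambda>z. hh_curv_profile (ln (cmod z))) \<longlongrightarrow> l) F"
    by (rule filterlim_compose[OF assms(1,2)])
  moreover have "\<forall>\<^sub>F z in F. hh_curv_profile (ln (cmod z)) = gauss_curv hh z"
    using assms(3) by eventually_elim (simp add: gauss_curv_hh)
  ultimately show ?thesis
    by (rule Lim_transform_eventually)
qed

theorem mainTheorem3:
  shows "(\<forall>z::complex. z \<noteq> 0 \<longrightarrow> gauss_curv hh z \<le> 0)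
       \<and> (gauss_curv hh \<longlongrightarrow> -4) (at 0)
       \<and> (gauss_curv hh \<longlongrightarrow> 0) at_infinity"
proof (intro conjI allI impI)
  show "gauss_curv hh z \<le> 0" if "z \<noteq> 0" for z :: complex
    using that by (simp add: gauss_curv_hh hh_curv_profile_nonpos)
next
  have "filterlim (\<lambda>z::complex. cmod z) (at_right 0) (at 0)"
    unfolding filterlim_at
    by (auto simp: eventually_at_filter intro!: tendsto_norm_zero tendsto_ident_at)
  then have "filterlim (\<lambda>z::complex. ln (cmod z)) at_bot (at 0)"
    by (rule filterlim_compose[OF ln_at_0])
  then show "(gauss_curv hh \<longlongrightarrow> -4) (at 0)"
    by (rule tendsto_gauss_curv_hh[OF tendsto_hh_curv_profile(2)]) (simp add: eventually_at_filter)
next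
  have "filterlim (\<lambda>z::complex. ln (cmod z)) at_top at_infinity"
    by (rule filterlim_compose[OF ln_at_top filterlim_norm_at_top])
  then show "(gauss_curv hh \<longlongrightarrow> 0) at_infinity"
    by (rule tendsto_gauss_curv_hh[OF tendsto_hh_curv_profile(1)])
       (rule eventually_not_equal_at_infinity)
qed

end
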